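(* Let $N\ge 1$, let $0\le\epsilon<1/2$, and let $H_N=\sum_{k=1}^N\frac1k$. Any comparison-based quantum algorithm for element distinctness on $N$ numbers (in the model described in the context) that errs with probability at most $\epsilon$ uses at least $$\Big(1-2\sqrt{\epsilon(1-\epsilon)}\Big)\frac{\sqrt{N}}{2\pi}(H_N-1)$$ comparisons.
   Context: Element distinctness problem: given a list $x=(x_0,\dots,x_{N-1})$ of numbers, decide whether the $x_i$ are pairwise distinct. Comparison-based quantum model: the algorithm acts on a Hilbert space with orthonormal basis $\{|z;i,i'\rangle\}$ ($z,i,i'$ non-negative integers); the input is accessible only through the comparison oracle $O_x|z;i,i'\rangle=(-1)^{m_{ii'}}|z;i,i'\rangle$, where for $0\le i,i'<N$, $m_{ii'}=1$ if $x_i<x_{i'}$ and $m_{ii'}=0$ otherwise (one application of $O_x$ is one comparison). An algorithm using $T$ comparisons is a unitary $(U O_x)^T U$ with $U$ a fixed unitary independent of $x$, applied to $|0\rangle$, followed by a measurement in the computational basis and reading of an output bit. It errs with probability at most $\epsilon$ if for every input list the output is the correct answer with probability at least $1-\epsilon$. *)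

theory Defs
  imports "HOL-Analysis.Analysis"
begin

text \<open>Computational basis labels |z;i,i'> are triples of naturals (z, i, i').
  A state is a complex-valued function on labels; the Hilbert space is l2 of labels.\<close>

type_synonym label = "nat \<times> nat \<times> nat"
type_synonym qstate = "label \<Rightarrow> complex"

definition sq_summable :: "qstate \<Rightarrow> bool" where
  "sq_summable \<psi> \<longleftrightarrow> (\<lambda>k. (cmod (\<psi> k))\<^sup>2) summable_on UNIV"

definition norm2 :: "qstate \<Rightarrow> real" where
  "norm2 \<psi> = infsum (\<lambda>k. (cmod (\<psi> k))\<^sup>2) UNIV"

definition unitary_op :: "(qstate \<Rightarrow> qstate) \<Rightarrow> bool" where
  "unitary_op U \<longleftrightarrow>
     (\<forall>\<psi>. sq_summable \<psi> \<longrightarrow> sq_summable (U \<psi>)) \<and>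
     (\<forall>\<psi> \<phi> (a::complex) (b::complex). sq_summable \<psi> \<longrightarrow> sq_summable \<phi> \<longrightarrow>
         U (\<lambda>k. a * \<psi> k + b * \<phi> k) = (\<lambda>k. a * U \<psi> k + b * U \<phi> k)) \<and>
     (\<forall>\<psi>. sq_summable \<psi> \<longrightarrow> norm2 (U \<psi>) = norm2 \<psi>) \<and>
     (\<forall>\<phi>. sq_summable \<phi> \<longrightarrow> (\<exists>\<psi>. sq_summable \<psi> \<and> U \<psi> = \<phi>))"

definition ket0 :: qstate where
  "ket0 = (\<lambda>k. if k = (0, 0, 0) then 1 else 0)"

definition cmp_oracle :: "nat \<Rightarrow> (nat \<Rightarrow> real) \<Rightarrow> qstate \<Rightarrow> qstate" where
  "cmp_oracle N x \<psi> = (\<lambda>(z, i, i').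
      if i < N \<and> i' < N \<and> x i < x i' then - \<psi> (z, i, i') else \<psi> (z, i, i'))"

definition final_state :: "(qstate \<Rightarrow> qstate) \<Rightarrow> nat \<Rightarrow> nat \<Rightarrow> (nat \<Rightarrow> real) \<Rightarrow> qstate" where
  "final_state U T N x = ((\<lambda>\<psi>. U (cmp_oracle N x \<psi>)) ^^ T) (U ket0)"

definition prob_output :: "(label \<Rightarrow> bool) \<Rightarrow> qstate \<Rightarrow> bool \<Rightarrow> real" where
  "prob_output out \<psi> b = infsum (\<lambda>k. if out k = b then (cmod (\<psi> k))\<^sup>2 else 0) UNIV"

definition all_distinct :: "nat \<Rightarrow> (nat \<Rightarrow> real) \<Rightarrow> bool" where
  "all_distinct N x \<longleftrightarrow> inj_on x {..<N}"

definition ED_algorithm :: "nat \<Rightarrow> real \<Rightarrow> (qstate \<Rightarrow> qstate) \<Rightarrow> (label \<Rightarrow> bool) \<Rightarrow> nat \<Rightarrow> bool" where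
  "ED_algorithm N \<epsilon> U out T \<longleftrightarrow> unitary_op U \<and>
     (\<forall>x. prob_output out (final_state U T N x) (all_distinct N x) \<ge> 1 - \<epsilon>)"

end

theory Submission
  imports Defs
begin

text \<open>Hybrid argument with a weighted adversary. On a list of distinct values and on a list
  with a collision, the final states of an algorithm with error \<open>\<epsilon>\<close> are at squared distance at
  least \<open>2 - 4 * sqrt (\<epsilon> * (1 - \<epsilon>))\<close>, while one comparison query increases the squared distance
  between the states of two inputs by at most four times the overlap of their amplitudes on the
  comparisons that the two inputs answer differently. The adversary pairs the permutation that
  carries the value \<open>a\<close> at position \<open>j\<close> with the list that carries the repeated value \<open>b\<close> there
  (all other positions ordered by the same \<open>\<rho>\<close>), with weight \<open>1 / \<bar>2 * a - 2 * b - 1\<bar>\<close>.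
  Only comparisons involving \<open>j\<close> can be answered differently, namely when \<open>a\<close> and \<open>b\<close> lie on
  different sides of the compared value, and a Schur test whose row and column sums telescope
  against an arctan bounds the weighted overlap of one query by \<open>pi * sqrt N * N!\<close>. The total
  weight is at least \<open>N! * N * (H\<^sub>N - 1)\<close>.\<close>

section \<open>Infinite sums\<close>

lemma summable_on_sum:
  fixes f :: "'i \<Rightarrow> 'a \<Rightarrow> 'b::topological_comm_monoid_add"
  assumes "finite I" "\<And>i. i \<in> I \<Longrightarrow> f i summable_on A"
  shows "(\<lambda>k. \<Sum>i\<in>I. f i k) summable_on A"
  using assms by (induction I rule: finite_induct) (auto intro: summable_on_add)

lemma infsum_sum:
  fixes f :: "'i \<Rightarrow> 'a \<Rightarrow> 'b::{topological_comm_monoid_add, t2_space}"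
  assumes "finite I" "\<And>i. i \<in> I \<Longrightarrow> f i summable_on A"
  shows "infsum (\<lambda>k. \<Sum>i\<in>I. f i k) A = (\<Sum>i\<in>I. infsum (f i) A)"
  using assms
proof (induction I rule: finite_induct)
  case (insert i I)
  then have "infsum (\<lambda>k. f i k + (\<Sum>i\<in>I. f i k)) A = infsum (f i) A + infsum (\<lambda>k. \<Sum>i\<in>I. f i k) A"
    by (intro infsum_add summable_on_sum) auto
  with insert show ?case by simp
qed simp

lemma summable_on_if_nonneg:
  fixes f :: "'a \<Rightarrow> real"
  assumes "f summable_on A" "\<And>k. 0 \<le> f k"
  shows "(\<lambda>k. if P k then f k else 0) summable_on A"
  by (rule summable_on_comparison_test[OF assms(1)]) (use assms(2) in auto)

lemma infsum_if_add_if_not: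
  fixes f :: "'a \<Rightarrow> real"
  assumes "f summable_on A" "\<And>k. 0 \<le> f k"
  shows "infsum (\<lambda>k. if P k then f k else 0) A + infsum (\<lambda>k. if \<not> P k then f k else 0) A = infsum f A"
proof -
  have "infsum (\<lambda>k. if P k then f k else 0) A + infsum (\<lambda>k. if \<not> P k then f k else 0) A
      = infsum (\<lambda>k. (if P k then f k else 0) + (if \<not> P k then f k else 0)) A"
    using assms by (intro infsum_add[symmetric] summable_on_if_nonneg)
  also have "\<dots> = infsum f A"
    by (rule infsum_cong) simp
  finally show ?thesis .
qed

lemma summable_on_mult_of_squares:
  fixes f g :: "'a \<Rightarrow> real"
  assumes "\<And>k. 0 \<le> f k" "\<And>k. 0 \<le> g k"
    and "(\<lambda>k. (f k)\<^sup>2) summable_on A" "(\<lambda>k. (g k)\<^sup>2) summable_on A"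
  shows "(\<lambda>k. f k * g k) summable_on A"
proof (rule summable_on_comparison_test)
  show "(\<lambda>k. (f k)\<^sup>2 + (g k)\<^sup>2) summable_on A"
    using assms(3,4) by (rule summable_on_add)
  show "f k * g k \<le> (f k)\<^sup>2 + (g k)\<^sup>2" for k
    using sum_squares_bound[of "f k" "g k"] mult_nonneg_nonneg[OF assms(1,2)[of k]] by linarith
qed (use assms in simp)

lemma infsum_mult_le_sqrt:
  fixes f g :: "'a \<Rightarrow> real"
  assumes "\<And>k. 0 \<le> f k" "\<And>k. 0 \<le> g k"
    and f2: "(\<lambda>k. (f k)\<^sup>2) summable_on A" and g2: "(\<lambda>k. (g k)\<^sup>2) summable_on A"
  shows "infsum (\<lambda>k. f k * g k) A \<le> sqrt (infsum (\<lambda>k. (f k)\<^sup>2) A) * sqrt (infsum (\<lambda>k. (g k)\<^sup>2) A)"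
proof (rule infsum_le_finite_sums)
  show "(\<lambda>k. f k * g k) summable_on A"
    using assms by (rule summable_on_mult_of_squares)
  fix F assume F: "finite F" "F \<subseteq> A"
  have "(\<Sum>k\<in>F. f k * g k) \<le> sqrt (\<Sum>k\<in>F. (f k)\<^sup>2) * sqrt (\<Sum>k\<in>F. (g k)\<^sup>2)"
    using real_le_rsqrt[OF Cauchy_Schwarz_ineq_sum] by (simp add: real_sqrt_mult)
  also have "\<dots> \<le> sqrt (infsum (\<lambda>k. (f k)\<^sup>2) A) * sqrt (infsum (\<lambda>k. (g k)\<^sup>2) A)"
    using F assms by (intro mult_mono real_sqrt_le_mono finite_sum_le_infsum f2 g2)
      (auto intro: infsum_nonneg sum_nonneg)
  finally show "(\<Sum>k\<in>F. f k * g k) \<le> \<dots>" .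
qed

section \<open>States and the comparison oracle\<close>

lemma sq_summable_diff:
  assumes "sq_summable \<psi>" "sq_summable \<phi>"
  shows "sq_summable (\<lambda>k. \<psi> k - \<phi> k)"
  unfolding sq_summable_def
proof (rule summable_on_comparison_test)
  show "(\<lambda>k. 2 * (cmod (\<psi> k))\<^sup>2 + 2 * (cmod (\<phi> k))\<^sup>2) summable_on UNIV"
    using assms unfolding sq_summable_def by (intro summable_on_add summable_on_cmult_right)
  fix k
  have "(cmod (\<psi> k - \<phi> k))\<^sup>2 \<le> (cmod (\<psi> k) + cmod (\<phi> k))\<^sup>2"
    by (simp add: power_mono norm_triangle_ineq4)
  also have "\<dots> \<le> 2 * (cmod (\<psi> k))\<^sup>2 + 2 * (cmod (\<phi> k))\<^sup>2"
    using sum_squares_bound[of "cmod (\<psi> k)" "cmod (\<phi> k)"] by (simp add: power2_sum)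
  finally show "(cmod (\<psi> k - \<phi> k))\<^sup>2 \<le> 2 * (cmod (\<psi> k))\<^sup>2 + 2 * (cmod (\<phi> k))\<^sup>2" .
qed simp

lemma summable_on_cmod_mult:
  assumes "sq_summable \<psi>" "sq_summable \<phi>"
  shows "(\<lambda>k. cmod (\<psi> k) * cmod (\<phi> k)) summable_on UNIV"
  using assms unfolding sq_summable_def by (intro summable_on_mult_of_squares) auto

lemma summable_on_cmod_sq_of_bool:
  assumes "sq_summable \<psi>"
  shows "(\<lambda>k. (cmod (\<psi> k))\<^sup>2 * of_bool (P k)) summable_on UNIV"
proof -
  have "(\<lambda>k. (cmod (\<psi> k))\<^sup>2 * of_bool (P k)) = (\<lambda>k. if P k then (cmod (\<psi> k))\<^sup>2 else 0)"
    by auto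
  then show ?thesis
    using summable_on_if_nonneg[OF assms[unfolded sq_summable_def]] by simp
qed

lemma sq_summable_ket0: "sq_summable ket0"
  and norm2_ket0: "norm2 ket0 = 1"
proof -
  have sq: "(cmod (ket0 k))\<^sup>2 = (if k = (0, 0, 0) then 1 else 0)" for k
    by (simp add: ket0_def)
  have "((\<lambda>k. (cmod (ket0 k))\<^sup>2) has_sum 1) {(0, 0, 0)}"
    by (rule has_sum_finiteI) (simp_all add: sq)
  then have "((\<lambda>k. (cmod (ket0 k))\<^sup>2) has_sum 1) UNIV"
    by (rule has_sum_cong_neutral[THEN iffD1, rotated -1]) (auto simp: sq)
  then show "sq_summable ket0" "norm2 ket0 = 1"
    unfolding sq_summable_def norm2_def by (auto simp: has_sum_iff)
qed

definition oracle_flips :: "nat \<Rightarrow> (nat \<Rightarrow> real) \<Rightarrow> label \<Rightarrow> bool" where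
  "oracle_flips N x k = (case k of (z, i, i') \<Rightarrow> i < N \<and> i' < N \<and> x i < x i')"

lemma cmp_oracle_eq: "cmp_oracle N x \<psi> k = (if oracle_flips N x k then - \<psi> k else \<psi> k)"
  by (cases k) (simp add: cmp_oracle_def oracle_flips_def)

lemma cmod_cmp_oracle [simp]: "cmod (cmp_oracle N x \<psi> k) = cmod (\<psi> k)"
  by (simp add: cmp_oracle_eq)

lemma sq_summable_cmp_oracle: "sq_summable \<psi> \<Longrightarrow> sq_summable (cmp_oracle N x \<psi>)"
  by (simp add: sq_summable_def)

lemma norm2_cmp_oracle [simp]: "norm2 (cmp_oracle N x \<psi>) = norm2 \<psi>"
  by (simp add: norm2_def)

lemma final_state_0: "final_state U 0 N x = U ket0"
  by (simp add: final_state_def)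

lemma final_state_Suc: "final_state U (Suc t) N x = U (cmp_oracle N x (final_state U t N x))"
  by (simp add: final_state_def)

lemma
  assumes "unitary_op U"
  shows sq_summable_final_state: "sq_summable (final_state U t N x)"
    and norm2_final_state: "norm2 (final_state U t N x) = 1"
  using assms sq_summable_ket0 norm2_ket0 sq_summable_cmp_oracle
  by (induction t) (auto simp: final_state_0 final_state_Suc unitary_op_def)

lemma unitary_op_norm2_diff:
  assumes U: "unitary_op U" and "sq_summable \<psi>" "sq_summable \<phi>"
  shows "norm2 (\<lambda>k. U \<psi> k - U \<phi> k) = norm2 (\<lambda>k. \<psi> k - \<phi> k)"
proof -
  have "U (\<lambda>k. 1 * \<psi> k + (-1) * \<phi> k) = (\<lambda>k. 1 * U \<psi> k + (-1) * U \<phi> k)"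
    using U assms unfolding unitary_op_def by blast
  then have "(\<lambda>k. U \<psi> k - U \<phi> k) = U (\<lambda>k. \<psi> k - \<phi> k)"
    by simp
  then show ?thesis
    using U sq_summable_diff[OF assms(2,3)] unfolding unitary_op_def by simp
qed

section \<open>The hybrid argument\<close>

lemma cmod_sign_diff_sq_le:
  fixes a b :: complex
  shows "(cmod ((if p then - a else a) - (if q then - b else b)))\<^sup>2
     \<le> (cmod (a - b))\<^sup>2 + 4 * (if p \<noteq> q then cmod a * cmod b else 0)"
proof (cases "p = q")
  case True
  then show ?thesis by (auto simp: norm_minus_commute)
next
  case False
  then have "cmod ((if p then - a else a) - (if q then - b else b)) = cmod (a + b)"
    by (auto simp: norm_minus_commute add.commute)
  moreover have "(cmod (a + b))\<^sup>2 \<le> (cmod a + cmod b)\<^sup>2"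
    by (simp add: power_mono norm_triangle_ineq)
  moreover have "(cmod a - cmod b)\<^sup>2 \<le> (cmod (a - b))\<^sup>2"
    by (metis abs_ge_zero norm_triangle_ineq3 power2_abs power_mono)
  moreover have "(cmod a + cmod b)\<^sup>2 = (cmod a - cmod b)\<^sup>2 + 4 * (cmod a * cmod b)"
    by (simp add: power2_sum power2_diff)
  ultimately show ?thesis using False by simp
qed

definition flip_overlap :: "(qstate \<Rightarrow> qstate) \<Rightarrow> nat \<Rightarrow> (nat \<Rightarrow> real) \<Rightarrow> (nat \<Rightarrow> real) \<Rightarrow> nat \<Rightarrow> real" where
  "flip_overlap U N x y t = infsum (\<lambda>k. if oracle_flips N x k \<noteq> oracle_flips N y k
     then cmod (final_state U t N x k) * cmod (final_state U t N y k) else 0) UNIV"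

lemma norm2_diff_final_state_Suc_le:
  assumes U: "unitary_op U"
  shows "norm2 (\<lambda>k. final_state U (Suc t) N x k - final_state U (Suc t) N y k)
     \<le> norm2 (\<lambda>k. final_state U t N x k - final_state U t N y k) + 4 * flip_overlap U N x y t"
proof -
  let ?a = "final_state U t N x" and ?b = "final_state U t N y"
  let ?flip = "\<lambda>k. if oracle_flips N x k \<noteq> oracle_flips N y k then cmod (?a k) * cmod (?b k) else 0"
  have sa: "sq_summable ?a" and sb: "sq_summable ?b"
    using U by (rule sq_summable_final_state)+
  have diff: "(\<lambda>k. (cmod (?a k - ?b k))\<^sup>2) summable_on UNIV"
    using sq_summable_diff[OF sa sb] by (simp add: sq_summable_def)
  have flip: "?flip summable_on UNIV"
    using summable_on_if_nonneg[OF summable_on_cmod_mult[OF sa sb]] by simp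
  have "norm2 (\<lambda>k. final_state U (Suc t) N x k - final_state U (Suc t) N y k)
      = norm2 (\<lambda>k. cmp_oracle N x ?a k - cmp_oracle N y ?b k)"
    unfolding final_state_Suc
    using U sq_summable_cmp_oracle[OF sa] sq_summable_cmp_oracle[OF sb] by (rule unitary_op_norm2_diff)
  also have "\<dots> \<le> infsum (\<lambda>k. (cmod (?a k - ?b k))\<^sup>2 + 4 * ?flip k) UNIV"
    unfolding norm2_def
  proof (rule infsum_mono)
    show "(\<lambda>k. (cmod (cmp_oracle N x ?a k - cmp_oracle N y ?b k))\<^sup>2) summable_on UNIV"
      using sq_summable_diff[OF sq_summable_cmp_oracle[OF sa] sq_summable_cmp_oracle[OF sb]]
      by (simp add: sq_summable_def)
    show "(\<lambda>k. (cmod (?a k - ?b k))\<^sup>2 + 4 * ?flip k) summable_on UNIV"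
      using diff flip by (intro summable_on_add summable_on_cmult_right)
  qed (unfold cmp_oracle_eq, rule cmod_sign_diff_sq_le)
  also have "\<dots> = norm2 (\<lambda>k. ?a k - ?b k) + 4 * flip_overlap U N x y t"
    using diff flip summable_on_cmult_right[OF flip]
    by (simp add: infsum_add infsum_cmult_right norm2_def flip_overlap_def)
  finally show ?thesis .
qed

lemma norm2_diff_final_state_le:
  assumes "unitary_op U"
  shows "norm2 (\<lambda>k. final_state U T N x k - final_state U T N y k) \<le> 4 * (\<Sum>t<T. flip_overlap U N x y t)"
proof (induction T)
  case 0
  then show ?case by (simp add: final_state_0 norm2_def)
next
  case (Suc T)
  then show ?case
    using norm2_diff_final_state_Suc_le[OF assms, of T N x y] by (simp add: algebra_simps)
qed

lemma sqrt_mult_add_sqrt_mult_le: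
  fixes P Q e :: real
  assumes "0 \<le> P" "P \<le> 1" "0 \<le> Q" "Q \<le> 1" "1 - e \<le> P" "1 - e \<le> 1 - Q" "0 \<le> e" "e < 1/2"
  shows "sqrt P * sqrt Q + sqrt (1 - P) * sqrt (1 - Q) \<le> 2 * sqrt (e * (1 - e))"
proof -
  define a a' b b' where "a = sqrt P" "a' = sqrt (1 - P)" "b = sqrt Q" "b' = sqrt (1 - Q)"
  define F D where "F = a * b + a' * b'" "D = a * b' - a' * b"
  have "F\<^sup>2 + D\<^sup>2 = (a\<^sup>2 + a'\<^sup>2) * (b\<^sup>2 + b'\<^sup>2)"
    unfolding F_D_def by (simp add: power2_eq_square algebra_simps)
  also have "\<dots> = 1"
    using assms by (simp add: a_a'_b_b'_def)
  finally have FD: "F\<^sup>2 + D\<^sup>2 = 1" .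
  have "sqrt ((1 - e) * (1 - e)) \<le> a * b'"
    unfolding a_a'_b_b'_def real_sqrt_mult[symmetric] using assms by (intro real_sqrt_le_mono mult_mono) auto
  moreover have "a' * b \<le> sqrt (e * e)"
    unfolding a_a'_b_b'_def real_sqrt_mult[symmetric] using assms by (intro real_sqrt_le_mono mult_mono) auto
  ultimately have "1 - 2 * e \<le> D"
    using assms unfolding F_D_def by simp
  then have "(1 - 2 * e)\<^sup>2 \<le> D\<^sup>2"
    using assms by (intro power_mono) auto
  then have "F\<^sup>2 \<le> 4 * (e * (1 - e))"
    using FD by (simp add: power2_eq_square algebra_simps)
  also have "\<dots> = (2 * sqrt (e * (1 - e)))\<^sup>2"
    using assms by (simp add: power_mult_distrib)
  finally have "F\<^sup>2 \<le> (2 * sqrt (e * (1 - e)))\<^sup>2" .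
  then have "F \<le> 2 * sqrt (e * (1 - e))"
    by (rule power2_le_imp_le) (use assms in simp)
  then show ?thesis unfolding F_D_def a_a'_b_b'_def .
qed

lemma prob_output_True_add_False:
  assumes "sq_summable \<psi>"
  shows "prob_output out \<psi> True + prob_output out \<psi> False = norm2 \<psi>"
  using infsum_if_add_if_not[OF assms[unfolded sq_summable_def], of out]
  by (simp add: prob_output_def norm2_def)

lemma prob_output_nonneg: "0 \<le> prob_output out \<psi> b"
  unfolding prob_output_def by (intro infsum_nonneg) simp

lemma infsum_cmod_mult_le_prob_output:
  assumes "sq_summable \<psi>" "sq_summable \<phi>"
  shows "infsum (\<lambda>k. cmod (\<psi> k) * cmod (\<phi> k)) UNIV
     \<le> sqrt (prob_output out \<psi> True) * sqrt (prob_output out \<phi> True)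
       + sqrt (prob_output out \<psi> False) * sqrt (prob_output out \<phi> False)"
proof -
  have part: "infsum (\<lambda>k. if out k = b then cmod (\<psi> k) * cmod (\<phi> k) else 0) UNIV
      \<le> sqrt (prob_output out \<psi> b) * sqrt (prob_output out \<phi> b)" for b
  proof -
    have restrict: "(\<lambda>k. (if out k = b then cmod (\<xi> k) else 0)\<^sup>2) = (\<lambda>k. if out k = b then (cmod (\<xi> k))\<^sup>2 else 0)"
      for \<xi> :: qstate
      by auto
    have "infsum (\<lambda>k. (if out k = b then cmod (\<psi> k) else 0) * (if out k = b then cmod (\<phi> k) else 0)) UNIV
        \<le> sqrt (prob_output out \<psi> b) * sqrt (prob_output out \<phi> b)"
      unfolding prob_output_def restrict[symmetric] using assms
      by (intro infsum_mult_le_sqrt) (auto simp: restrict sq_summable_def intro: summable_on_if_nonneg)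
    then show ?thesis by (simp add: if_distrib cong: if_cong)
  qed
  have "infsum (\<lambda>k. cmod (\<psi> k) * cmod (\<phi> k)) UNIV
      = infsum (\<lambda>k. if out k then cmod (\<psi> k) * cmod (\<phi> k) else 0) UNIV
        + infsum (\<lambda>k. if \<not> out k then cmod (\<psi> k) * cmod (\<phi> k) else 0) UNIV"
    using assms by (intro infsum_if_add_if_not[symmetric] summable_on_cmod_mult) auto
  also have "\<dots> \<le> sqrt (prob_output out \<psi> True) * sqrt (prob_output out \<phi> True)
       + sqrt (prob_output out \<psi> False) * sqrt (prob_output out \<phi> False)"
    using part[of True] part[of False] by simp
  finally show ?thesis .
qed

lemma norm2_diff_ge_infsum_cmod_mult:
  assumes "sq_summable \<psi>" "sq_summable \<phi>" "norm2 \<psi> = 1" "norm2 \<phi> = 1"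
  shows "2 - 2 * infsum (\<lambda>k. cmod (\<psi> k) * cmod (\<phi> k)) UNIV \<le> norm2 (\<lambda>k. \<psi> k - \<phi> k)"
proof -
  have sq: "(\<lambda>k. (cmod (\<psi> k))\<^sup>2) summable_on UNIV" "(\<lambda>k. (cmod (\<phi> k))\<^sup>2) summable_on UNIV"
    using assms(1,2) by (simp_all add: sq_summable_def)
  have prod: "(\<lambda>k. -2 * (cmod (\<psi> k) * cmod (\<phi> k))) summable_on UNIV"
    using assms(1,2) by (intro summable_on_cmult_right summable_on_cmod_mult)
  have "infsum (\<lambda>k. (cmod (\<psi> k))\<^sup>2 + (cmod (\<phi> k))\<^sup>2 + -2 * (cmod (\<psi> k) * cmod (\<phi> k))) UNIV
      = infsum (\<lambda>k. (cmod (\<psi> k))\<^sup>2 + (cmod (\<phi> k))\<^sup>2) UNIV + infsum (\<lambda>k. -2 * (cmod (\<psi> k) * cmod (\<phi> k))) UNIV"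
    using summable_on_add[OF sq] prod by (rule infsum_add)
  also have "\<dots> = 2 - 2 * infsum (\<lambda>k. cmod (\<psi> k) * cmod (\<phi> k)) UNIV"
    using assms(3,4) infsum_cmult_right'[of "-2" "\<lambda>k. cmod (\<psi> k) * cmod (\<phi> k)" UNIV]
    by (simp add: infsum_add[OF sq] norm2_def)
  finally have "2 - 2 * infsum (\<lambda>k. cmod (\<psi> k) * cmod (\<phi> k)) UNIV
      = infsum (\<lambda>k. (cmod (\<psi> k))\<^sup>2 + (cmod (\<phi> k))\<^sup>2 + -2 * (cmod (\<psi> k) * cmod (\<phi> k))) UNIV" ..
  also have "\<dots> \<le> norm2 (\<lambda>k. \<psi> k - \<phi> k)"
    unfolding norm2_def
  proof (rule infsum_mono)
    show "(\<lambda>k. (cmod (\<psi> k))\<^sup>2 + (cmod (\<phi> k))\<^sup>2 + -2 * (cmod (\<psi> k) * cmod (\<phi> k))) summable_on UNIV"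
      using sq prod by (intro summable_on_add)
    show "(\<lambda>k. (cmod (\<psi> k - \<phi> k))\<^sup>2) summable_on UNIV"
      using sq_summable_diff[OF assms(1,2)] by (simp add: sq_summable_def)
    fix k
    have "(cmod (\<psi> k) - cmod (\<phi> k))\<^sup>2 \<le> (cmod (\<psi> k - \<phi> k))\<^sup>2"
      by (metis abs_ge_zero norm_triangle_ineq3 power2_abs power_mono)
    then show "(cmod (\<psi> k))\<^sup>2 + (cmod (\<phi> k))\<^sup>2 + -2 * (cmod (\<psi> k) * cmod (\<phi> k)) \<le> (cmod (\<psi> k - \<phi> k))\<^sup>2"
      by (simp add: power2_diff)
  qed
  finally show ?thesis .
qed

lemma norm2_diff_final_state_ge:
  assumes alg: "ED_algorithm N e U out T" and "0 \<le> e" "e < 1/2"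
    and x: "all_distinct N x" and y: "\<not> all_distinct N y"
  shows "2 - 4 * sqrt (e * (1 - e)) \<le> norm2 (\<lambda>k. final_state U T N x k - final_state U T N y k)"
proof -
  let ?x = "final_state U T N x" and ?y = "final_state U T N y"
  let ?P = "prob_output out ?x True" and ?Q = "prob_output out ?y True"
  have U: "unitary_op U" using alg by (simp add: ED_algorithm_def)
  have sx: "sq_summable ?x" "norm2 ?x = 1" and sy: "sq_summable ?y" "norm2 ?y = 1"
    using U by (simp_all add: sq_summable_final_state norm2_final_state)
  have Pc: "prob_output out ?x False = 1 - ?P" and Qc: "prob_output out ?y False = 1 - ?Q"
    using prob_output_True_add_False[OF sx(1), of out] prob_output_True_add_False[OF sy(1), of out] sx sy
    by simp_all
  have "1 - e \<le> ?P" "1 - e \<le> 1 - ?Q"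
    using alg x y Qc unfolding ED_algorithm_def by (metis (full_types))+
  moreover have "0 \<le> ?P" "?P \<le> 1" "0 \<le> ?Q" "?Q \<le> 1"
    using prob_output_nonneg[of out ?x] prob_output_nonneg[of out ?y] by (metis Pc Qc diff_ge_0_iff_ge)+
  ultimately have "sqrt ?P * sqrt ?Q + sqrt (1 - ?P) * sqrt (1 - ?Q) \<le> 2 * sqrt (e * (1 - e))"
    using assms(2,3) by (intro sqrt_mult_add_sqrt_mult_le)
  then have "infsum (\<lambda>k. cmod (?x k) * cmod (?y k)) UNIV \<le> 2 * sqrt (e * (1 - e))"
    using infsum_cmod_mult_le_prob_output[OF sx(1) sy(1), of out] by (simp add: Pc Qc)
  then show ?thesis
    using norm2_diff_ge_infsum_cmod_mult[OF sx(1) sy(1) sx(2) sy(2)] by linarith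
qed

section \<open>The adversary\<close>

definition skip :: "nat \<Rightarrow> nat \<Rightarrow> nat" where
  "skip a v = (if v < a then v else Suc v)"

definition unskip :: "nat \<Rightarrow> nat \<Rightarrow> nat" where
  "unskip a i = (if i < a then i else i - 1)"

lemma skip_less_skip_iff [simp]: "skip a v < skip a v' \<longleftrightarrow> v < v'"
  by (simp add: skip_def)

lemma skip_eq_skip_iff [simp]: "skip a v = skip a v' \<longleftrightarrow> v = v'"
  by (auto simp: skip_def)

lemma less_skip_iff: "a < skip a v \<longleftrightarrow> a \<le> v"
  by (simp add: skip_def)

lemma skip_less_iff: "skip a v < a \<longleftrightarrow> v < a"
  by (simp add: skip_def)

lemma skip_neq [simp]: "skip a v \<noteq> a"
  by (simp add: skip_def)

lemma skip_less: "v < N - 1 \<Longrightarrow> a < N \<Longrightarrow> skip a v < N"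
  by (simp add: skip_def) linarith

lemma unskip_skip [simp]: "unskip a (skip a v) = v"
  by (simp add: skip_def unskip_def)

lemma unskip_less: "i < N \<Longrightarrow> i \<noteq> a \<Longrightarrow> a < N \<Longrightarrow> unskip a i < N - 1"
  by (auto simp: unskip_def)

lemma unskip_inj: "i \<noteq> a \<Longrightarrow> i' \<noteq> a \<Longrightarrow> unskip a i = unskip a i' \<Longrightarrow> i = i'"
  by (auto simp: unskip_def split: if_splits)

text \<open>\<open>insert_at N j \<rho> a\<close> is the permutation of \<open>{..<N}\<close> with \<open>a\<close> at position \<open>j\<close> and the other
  values in the order \<open>\<rho>\<close>; \<open>collision_input j \<rho> b\<close> repeats at \<open>j\<close> the value \<open>b < N - 1\<close> that
  \<open>\<rho>\<close> assigns to another position.\<close>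

definition insert_at :: "nat \<Rightarrow> nat \<Rightarrow> (nat \<Rightarrow> nat) \<Rightarrow> nat \<Rightarrow> nat \<Rightarrow> nat" where
  "insert_at N j \<rho> a i = (if i = j then a else if i < N then skip a (\<rho> (unskip j i)) else i)"

definition distinct_input :: "nat \<Rightarrow> nat \<Rightarrow> (nat \<Rightarrow> nat) \<Rightarrow> nat \<Rightarrow> nat \<Rightarrow> real" where
  "distinct_input N j \<rho> a = (\<lambda>i. real (insert_at N j \<rho> a i))"

definition collision_input :: "nat \<Rightarrow> (nat \<Rightarrow> nat) \<Rightarrow> nat \<Rightarrow> nat \<Rightarrow> real" where
  "collision_input j \<rho> b = (\<lambda>i. real (if i = j then b else \<rho> (unskip j i)))"

lemma insert_at_permutes:
  assumes j: "j < N" and \<rho>: "\<rho> permutes {..<N - 1}" and a: "a < N"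
  shows "insert_at N j \<rho> a permutes {..<N}"
proof (rule bij_imp_permutes)
  let ?\<sigma> = "insert_at N j \<rho> a"
  have "?\<sigma> i < N" if "i < N" for i
  proof (cases "i = j")
    case False
    then have "\<rho> (unskip j i) < N - 1"
      using permutes_in_image[OF \<rho>] unskip_less[OF that False j] by simp
    then show ?thesis using that False a by (simp add: insert_at_def skip_less)
  qed (use a in \<open>simp add: insert_at_def\<close>)
  moreover have "inj_on ?\<sigma> {..<N}"
  proof (rule inj_onI)
    fix i i' assume i: "i \<in> {..<N}" "i' \<in> {..<N}" and eq: "?\<sigma> i = ?\<sigma> i'"
    show "i = i'"
    proof (cases "i = j"; cases "i' = j")
      assume "i \<noteq> j" "i' \<noteq> j"
      then have "\<rho> (unskip j i) = \<rho> (unskip j i')"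
        using i eq by (simp add: insert_at_def)
      then show ?thesis
        using permutes_inj[OF \<rho>] unskip_inj \<open>i \<noteq> j\<close> \<open>i' \<noteq> j\<close> by (metis injD)
    qed (use i eq in \<open>auto simp: insert_at_def dest: sym[of a] sym[of "skip a _"]\<close>)
  qed
  ultimately show "bij_betw ?\<sigma> {..<N} {..<N}"
    using endo_inj_surj[of "{..<N}" ?\<sigma>] by (auto simp: bij_betw_def)
  show "?\<sigma> i = i" if "i \<notin> {..<N}" for i
    using that j by (simp add: insert_at_def)
qed

lemma inj_on_insert_at:
  assumes j: "j < N"
  shows "inj_on (\<lambda>(\<rho>, a). insert_at N j \<rho> a) ({\<rho>. \<rho> permutes {..<N - 1}} \<times> {..<N})"
proof (rule inj_onI, clarify)
  fix \<rho> a \<rho>' a'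
  assume \<rho>: "\<rho> permutes {..<N - 1}" "\<rho>' permutes {..<N - 1}"
    and eq: "insert_at N j \<rho> a = insert_at N j \<rho>' a'"
  have a: "a = a'"
    using fun_cong[OF eq, of j] by (simp add: insert_at_def)
  have "\<rho> m = \<rho>' m" for m
  proof (cases "m < N - 1")
    case True
    then have "skip a (\<rho> m) = skip a (\<rho>' m)"
      using fun_cong[OF eq, of "skip j m"] a skip_less[OF True j] by (simp add: insert_at_def)
    then show ?thesis by simp
  next
    case False
    then show ?thesis using \<rho> by (simp add: permutes_not_in)
  qed
  with a show "\<rho> = \<rho>' \<and> a = a'" by auto
qed

lemma all_distinct_distinct_input:
  assumes "j < N" "\<rho> permutes {..<N - 1}" "a < N"
  shows "all_distinct N (distinct_input N j \<rho> a)"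
  using permutes_inj_on[OF insert_at_permutes[OF assms]]
  by (auto simp: all_distinct_def distinct_input_def inj_on_def)

lemma not_all_distinct_collision_input:
  assumes j: "j < N" and \<rho>: "\<rho> permutes {..<N - 1}" and b: "b < N - 1"
  shows "\<not> all_distinct N (collision_input j \<rho> b)"
proof
  obtain m where m: "m < N - 1" "\<rho> m = b"
    using permutes_image[OF \<rho>] b by (metis imageE lessThan_iff)
  then have "collision_input j \<rho> b (skip j m) = collision_input j \<rho> b j"
    by (simp add: collision_input_def)
  moreover assume "all_distinct N (collision_input j \<rho> b)"
  ultimately show False
    using skip_less[OF m(1) j] j skip_neq unfolding all_distinct_def inj_on_def by blast
qed

definition touches :: "nat \<Rightarrow> nat \<Rightarrow> label \<Rightarrow> bool" where
  "touches N j k = (case k of (z, i, i') \<Rightarrow> i < N \<and> i' < N \<and> i \<noteq> i' \<and> (i = j \<or> i' = j))"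

text \<open>A query comparing position \<open>j\<close> with a position holding \<open>p\<close> in \<open>\<rho>\<close> is answered
  differently on the two inputs iff \<open>a\<close> and \<open>b\<close> lie on different sides of \<open>p\<close>; the flag
  \<open>ty\<close> records whether \<open>j\<close> is the first or the second compared position.\<close>

definition answers_differ :: "bool \<Rightarrow> nat \<Rightarrow> nat \<Rightarrow> nat \<Rightarrow> bool" where
  "answers_differ ty p a b = (if ty then (a \<le> p) \<noteq> (b < p) else (p < a) \<noteq> (p < b))"

lemma oracle_flips_eq_if_not_touches:
  assumes "\<not> touches N j k"
  shows "oracle_flips N (distinct_input N j \<rho> a) k = oracle_flips N (collision_input j \<rho> b) k"
  using assms
  by (cases k) (auto simp: touches_def oracle_flips_def distinct_input_def collision_input_def insert_at_def)

lemma oracle_flips_neq_iff_answers_differ: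
  assumes "touches N j k" "j < N"
  obtains ty p where "\<And>a b. oracle_flips N (distinct_input N j \<rho> a) k \<noteq> oracle_flips N (collision_input j \<rho> b) k
    \<longleftrightarrow> answers_differ ty p a b"
proof -
  obtain z i i' where k: "k = (z, i, i')" by (cases k)
  show thesis
  proof (cases "i = j")
    case True
    with assms have "i' < N" "i' \<noteq> j" by (auto simp: touches_def k)
    then show thesis using True assms(2)
      by (intro that[of True "\<rho> (unskip j i')"])
        (auto simp: k oracle_flips_def distinct_input_def collision_input_def insert_at_def
          answers_differ_def less_skip_iff)
  next
    case False
    with assms have "i < N" "i' = j" by (auto simp: touches_def k)
    then show thesis using False assms(2)
      by (intro that[of False "\<rho> (unskip j i)"])
        (auto simp: k oracle_flips_def distinct_input_def collision_input_def insert_at_def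
          answers_differ_def skip_less_iff)
  qed
qed

section \<open>Schur test for the adversary weights\<close>

definition phi :: "nat \<Rightarrow> nat \<Rightarrow> real" where
  "phi s t = sqrt ((4 * real s + 1) / (4 * real t + 1)) / (2 * real s + 2 * real t + 1)"

lemma phi_nonneg: "0 \<le> phi s t"
  by (simp add: phi_def)

lemma has_real_derivative_arctan_sqrt_divide:
  assumes x: "0 < x" and y: "0 < y"
  shows "((\<lambda>y. arctan (sqrt y / sqrt x)) has_real_derivative sqrt x / (2 * sqrt y * (x + y))) (at y)"
proof -
  have "((\<lambda>y. arctan (sqrt y / sqrt x)) has_real_derivative
        inverse (1 + (sqrt y / sqrt x)\<^sup>2) * (inverse (sqrt y) / 2 / sqrt x)) (at y)"
    by (rule DERIV_chain2[OF DERIV_arctan] DERIV_cdivide DERIV_real_sqrt y)+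
  moreover have "inverse (1 + (v / u)\<^sup>2) * (inverse v / 2 / u) = u / (2 * v * (u\<^sup>2 + v\<^sup>2))"
    if "0 < u" "0 < v" for u v :: real
    using that by (simp add: field_simps power2_eq_square)
  ultimately show ?thesis
    using x y by simp
qed

lemma arctan_sqrt_divide_increment_ge:
  assumes x: "0 < x" and y: "0 < y"
  shows "sqrt x / (2 * sqrt (y + 1) * (x + (y + 1))) \<le> arctan (sqrt (y + 1) / sqrt x) - arctan (sqrt y / sqrt x)"
proof -
  obtain z where z: "y < z" "z < y + 1"
    and eq: "arctan (sqrt (y + 1) / sqrt x) - arctan (sqrt y / sqrt x) = (y + 1 - y) * (sqrt x / (2 * sqrt z * (x + z)))"
    using MVT2[of y "y + 1" "\<lambda>y. arctan (sqrt y / sqrt x)" "\<lambda>y. sqrt x / (2 * sqrt y * (x + y))"]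
      has_real_derivative_arctan_sqrt_divide[OF x] y by force
  have "sqrt x / (2 * sqrt (y + 1) * (x + (y + 1))) \<le> sqrt x / (2 * sqrt z * (x + z))"
    using x y z by (intro divide_left_mono mult_mono mult_pos_pos) auto
  then show ?thesis using eq by simp
qed

lemma divide_one_plus_square_le_arctan:
  assumes "0 \<le> r"
  shows "r / (1 + r\<^sup>2) \<le> arctan r"
proof (cases "r = 0")
  case False
  then have r: "0 < r" using assms by simp
  obtain z where z: "0 < z" "z < r" and eq: "arctan r - arctan 0 = (r - 0) * inverse (1 + z\<^sup>2)"
    using MVT2[of 0 r arctan "\<lambda>z. inverse (1 + z\<^sup>2)"] r DERIV_arctan by blast
  have "inverse (1 + r\<^sup>2) \<le> inverse (1 + z\<^sup>2)"
    using z by (intro le_imp_inverse_le) (auto intro: power_mono add_pos_nonneg)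
  then show ?thesis
    using eq r by (simp add: divide_inverse)
qed simp

lemma phi_eq:
  "phi s t = sqrt (real s + 1/4) / (2 * sqrt (real t + 1/4) * ((real s + 1/4) + (real t + 1/4)))"
proof -
  have "(4 * real s + 1) / (4 * real t + 1) = (real s + 1/4) / (real t + 1/4)"
    by (simp add: field_simps)
  then show ?thesis
    unfolding phi_def by (simp add: real_sqrt_divide algebra_simps)
qed

text \<open>With \<open>x = s + 1/4\<close> and \<open>y = t + 1/4\<close>, \<open>phi s t\<close> is the derivative in \<open>y\<close> of
  \<open>arctan (sqrt (y / x))\<close>, which decreases in \<open>y\<close>; so the sum over \<open>t \<ge> 1\<close> telescopes
  to less than \<open>pi / 2 - arctan (1 / (2 * sqrt x))\<close>.\<close>

lemma sum_lessThan_phi_le: "(\<Sum>t<M. phi s t) \<le> (pi + 1) / 2"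
proof -
  define x where "x = real s + 1/4"
  have x: "0 < x" by (simp add: x_def)
  define G where "G t = arctan (sqrt (real t + 1/4) / sqrt x)" for t :: nat
  have step: "phi s (Suc t) \<le> G (Suc t) - G t" for t
    using arctan_sqrt_divide_increment_ge[OF x, of "real t + 1/4"]
    unfolding phi_eq G_def x_def by (simp add: algebra_simps)
  define r where "r = (1/2) / sqrt x"
  have r: "0 \<le> r" using x by (simp add: r_def)
  have G0: "G 0 = arctan r"
    by (simp add: G_def r_def real_sqrt_divide)
  have phi0: "phi s 0 = 2 * (r / (1 + r\<^sup>2))"
  proof -
    have "u / (u\<^sup>2 + 1/4) = 2 * ((1/2) / u / (1 + ((1/2) / u)\<^sup>2))" if "0 < u" for u :: real
      using that by (simp add: field_simps power2_eq_square)
    from this[of "sqrt x"] show ?thesis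
      using x unfolding phi_eq x_def r_def by (simp add: real_sqrt_divide)
  qed
  have "r / (1 + r\<^sup>2) \<le> 1/2"
    using sum_squares_bound[of r 1] by (simp add: field_simps add_pos_nonneg)
  then have head: "phi s 0 - G 0 \<le> 1/2"
    using divide_one_plus_square_le_arctan[OF r] phi0 G0 by linarith
  show ?thesis
  proof (cases M)
    case (Suc n)
    have "(\<Sum>t<M. phi s t) = phi s 0 + (\<Sum>t<n. phi s (Suc t))"
      unfolding Suc by (rule sum.lessThan_Suc_shift)
    also have "\<dots> \<le> phi s 0 + (\<Sum>t<n. G (Suc t) - G t)"
      by (intro add_left_mono sum_mono step)
    also have "\<dots> = (phi s 0 - G 0) + G n"
      by (simp add: sum_lessThan_telescope)
    also have "\<dots> \<le> 1/2 + pi/2"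
      using head arctan_ubound[of "sqrt (real n + 1/4) / sqrt x"] by (simp add: G_def)
    finally show ?thesis by simp
  qed (simp add: pi_gt_zero add_pos_nonneg)
qed

lemma sum_phi_inj_le:
  assumes "finite S" "inj_on g S"
  shows "(\<Sum>b\<in>S. phi s (g b)) \<le> (pi + 1) / 2"
proof -
  obtain M where M: "g ` S \<subseteq> {..<M}"
    using assms(1) finite_nat_bounded by blast
  have "(\<Sum>b\<in>S. phi s (g b)) = (\<Sum>t\<in>g ` S. phi s t)"
    using sum.reindex[OF assms(2), of "phi s"] by simp
  also have "\<dots> \<le> (\<Sum>t<M. phi s t)"
    using M by (intro sum_mono2) (auto simp: phi_nonneg)
  also have "\<dots> \<le> (pi + 1) / 2"
    by (rule sum_lessThan_phi_le)
  finally show ?thesis .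
qed

lemma schur_test:
  fixes w \<alpha> :: "'a \<Rightarrow> 'b \<Rightarrow> real" and X :: "'a \<Rightarrow> real" and Y :: "'b \<Rightarrow> real"
  assumes w: "\<And>a b. 0 \<le> w a b" and \<alpha>: "\<And>a b. 0 < \<alpha> a b"
    and row: "\<And>a. a \<in> A \<Longrightarrow> (\<Sum>b\<in>B. if D a b then w a b * \<alpha> a b else 0) \<le> R"
    and col: "\<And>b. b \<in> B \<Longrightarrow> (\<Sum>a\<in>A. if D a b then w a b / \<alpha> a b else 0) \<le> C"
  shows "(\<Sum>a\<in>A. \<Sum>b\<in>B. if D a b then w a b * (X a * Y b) else 0)
     \<le> R / 2 * (\<Sum>a\<in>A. (X a)\<^sup>2) + C / 2 * (\<Sum>b\<in>B. (Y b)\<^sup>2)"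
proof -
  have amgm: "(if D a b then w a b * (X a * Y b) else 0)
      \<le> (X a)\<^sup>2 / 2 * (if D a b then w a b * \<alpha> a b else 0) + (Y b)\<^sup>2 / 2 * (if D a b then w a b / \<alpha> a b else 0)"
    for a b
  proof -
    have "0 \<le> (\<alpha> a b * X a - Y b)\<^sup>2 / \<alpha> a b"
      using \<alpha>[of a b] by simp
    then have "X a * Y b \<le> \<alpha> a b * (X a)\<^sup>2 / 2 + (Y b)\<^sup>2 / (2 * \<alpha> a b)"
      using \<alpha>[of a b] by (simp add: power2_diff field_simps power2_eq_square)
    from mult_left_mono[OF this w[of a b]] show ?thesis
      by (simp add: field_simps)
  qed
  have "(\<Sum>a\<in>A. \<Sum>b\<in>B. if D a b then w a b * (X a * Y b) else 0)
      \<le> (\<Sum>a\<in>A. (X a)\<^sup>2 / 2 * (\<Sum>b\<in>B. if D a b then w a b * \<alpha> a b else 0))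
      + (\<Sum>b\<in>B. (Y b)\<^sup>2 / 2 * (\<Sum>a\<in>A. if D a b then w a b / \<alpha> a b else 0))"
    using sum_mono[OF sum_mono[OF amgm]]
    by (simp add: sum.distrib sum_distrib_left sum.swap[of _ A B])
  also have "\<dots> \<le> (\<Sum>a\<in>A. (X a)\<^sup>2 / 2 * R) + (\<Sum>b\<in>B. (Y b)\<^sup>2 / 2 * C)"
    by (intro add_mono sum_mono mult_left_mono row col) auto
  also have "\<dots> = R / 2 * (\<Sum>a\<in>A. (X a)\<^sup>2) + C / 2 * (\<Sum>b\<in>B. (Y b)\<^sup>2)"
    by (simp add: sum_distrib_left sum_distrib_right field_simps)
  finally show ?thesis .
qed

definition adv_weight :: "nat \<Rightarrow> nat \<Rightarrow> real" where
  "adv_weight a b = 1 / \<bar>2 * real a - 2 * real b - 1\<bar>"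

text \<open>Distances of \<open>a\<close> and \<open>b\<close> from the threshold \<open>p\<close>, counted so that
  \<open>\<bar>2 * a - 2 * b - 1\<bar> = 2 * xgap p a + 2 * ygap p b + 1\<close> whenever they lie on different sides.\<close>

definition xgap :: "nat \<Rightarrow> nat \<Rightarrow> nat" where
  "xgap p a = (if a \<le> p then p - a else a - p - 1)"

definition ygap :: "nat \<Rightarrow> nat \<Rightarrow> nat" where
  "ygap p b = (if p \<le> b then b - p else p - b)"

definition schur_factor :: "real \<Rightarrow> nat \<Rightarrow> nat \<Rightarrow> nat \<Rightarrow> real" where
  "schur_factor l p a b = l * sqrt ((4 * real (xgap p a) + 1) / (4 * real (ygap p b) + 1))"

lemma adv_weight_nonneg: "0 \<le> adv_weight a b"
  by (simp add: adv_weight_def)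

lemma schur_factor_pos: "0 < l \<Longrightarrow> 0 < schur_factor l p a b"
  unfolding schur_factor_def by (intro mult_pos_pos real_sqrt_gt_zero divide_pos_pos) auto

lemma answers_differ_cases: "answers_differ ty p a b \<Longrightarrow> (a \<le> p \<and> p \<le> b) \<or> (p < a \<and> b \<le> p)"
  by (auto simp: answers_differ_def split: if_splits)

lemma
  assumes "answers_differ ty p a b" "0 < l"
  shows adv_weight_mult_schur_factor: "adv_weight a b * schur_factor l p a b = l * phi (xgap p a) (ygap p b)"
    and adv_weight_divide_schur_factor: "adv_weight a b / schur_factor l p a b = phi (ygap p b) (xgap p a) / l"
proof -
  let ?s = "real (xgap p a)" and ?t = "real (ygap p b)"
  have w: "adv_weight a b = 1 / (2 * ?s + 2 * ?t + 1)"
    using answers_differ_cases[OF assms(1)] by (auto simp: adv_weight_def xgap_def ygap_def of_nat_diff)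
  then show "adv_weight a b * schur_factor l p a b = l * phi (xgap p a) (ygap p b)"
    by (simp add: schur_factor_def phi_def)
  define q where "q = sqrt ((4 * ?s + 1) / (4 * ?t + 1))"
  have q: "0 < q"
    by (simp add: q_def add_pos_nonneg)
  have "sqrt ((4 * ?t + 1) / (4 * ?s + 1)) = 1 / q"
    by (simp add: q_def real_sqrt_divide)
  then have "phi (ygap p b) (xgap p a) = 1 / q / (2 * ?s + 2 * ?t + 1)"
    by (simp add: phi_def algebra_simps)
  moreover have "schur_factor l p a b = l * q"
    by (simp add: schur_factor_def q_def)
  ultimately show "adv_weight a b / schur_factor l p a b = phi (ygap p b) (xgap p a) / l"
    using q assms(2) by (simp add: w field_simps add_pos_nonneg)
qed

lemma row_sum_adv_weight_mult_schur_factor_le: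
  assumes l: "0 < l"
  shows "(\<Sum>b<M. if answers_differ ty p a b then adv_weight a b * schur_factor l p a b else 0) \<le> l * ((pi + 1) / 2)"
proof -
  let ?S = "{b\<in>{..<M}. answers_differ ty p a b}"
  have "inj_on (ygap p) ?S"
    by (auto simp: inj_on_def ygap_def dest!: answers_differ_cases)
  then have "(\<Sum>b\<in>?S. phi (xgap p a) (ygap p b)) \<le> (pi + 1) / 2"
    by (intro sum_phi_inj_le) auto
  moreover have "(\<Sum>b<M. if answers_differ ty p a b then adv_weight a b * schur_factor l p a b else 0)
      = l * (\<Sum>b\<in>?S. phi (xgap p a) (ygap p b))"
    unfolding sum.inter_filter[symmetric, OF finite_lessThan] sum_distrib_left
    by (rule sum.cong) (auto simp: adv_weight_mult_schur_factor[OF _ l])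
  ultimately show ?thesis
    using l by simp
qed

lemma col_sum_adv_weight_divide_schur_factor_le:
  assumes l: "0 < l"
  shows "(\<Sum>a<M. if answers_differ ty p a b then adv_weight a b / schur_factor l p a b else 0) \<le> (pi + 1) / 2 / l"
proof -
  let ?S = "{a\<in>{..<M}. answers_differ ty p a b}"
  have "inj_on (xgap p) ?S"
    by (cases ty; cases "b < p"; cases "p < b") (auto simp: inj_on_def xgap_def answers_differ_def)
  then have "(\<Sum>a\<in>?S. phi (ygap p b) (xgap p a)) \<le> (pi + 1) / 2"
    by (intro sum_phi_inj_le) auto
  moreover have "(\<Sum>a<M. if answers_differ ty p a b then adv_weight a b / schur_factor l p a b else 0)
      = (\<Sum>a\<in>?S. phi (ygap p b) (xgap p a)) / l"
    unfolding sum.inter_filter[symmetric, OF finite_lessThan] sum_divide_distrib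
    by (rule sum.cong) (auto simp: adv_weight_divide_schur_factor[OF _ l])
  ultimately show ?thesis
    using divide_right_mono[of _ "(pi + 1) / 2" l] l by simp
qed

lemma sum_adv_weight_flips_differ_le:
  assumes j: "j < N" and l: "0 < l"
  shows "(\<Sum>a<N. \<Sum>b<N - 1. adv_weight a b *
      (if oracle_flips N (distinct_input N j \<rho> a) k \<noteq> oracle_flips N (collision_input j \<rho> b) k
       then X a * Y b else 0))
    \<le> l * ((pi + 1) / 2) / 2 * (\<Sum>a<N. (X a)\<^sup>2 * of_bool (touches N j k))
      + (pi + 1) / 2 / l / 2 * (\<Sum>b<N - 1. (Y b)\<^sup>2 * of_bool (touches N j k))"
proof (cases "touches N j k")
  case True
  obtain ty p where differ: "\<And>a b. oracle_flips N (distinct_input N j \<rho> a) k \<noteq> oracle_flips N (collision_input j \<rho> b) k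
      \<longleftrightarrow> answers_differ ty p a b"
    using oracle_flips_neq_iff_answers_differ[OF True j] by blast
  have "(\<Sum>a<N. \<Sum>b<N - 1. if answers_differ ty p a b then adv_weight a b * (X a * Y b) else 0)
    \<le> l * ((pi + 1) / 2) / 2 * (\<Sum>a<N. (X a)\<^sup>2) + (pi + 1) / 2 / l / 2 * (\<Sum>b<N - 1. (Y b)\<^sup>2)"
    using l by (intro schur_test[where \<alpha> = "schur_factor l p"] adv_weight_nonneg schur_factor_pos
        row_sum_adv_weight_mult_schur_factor_le col_sum_adv_weight_divide_schur_factor_le)
  moreover have "adv_weight a b *
      (if oracle_flips N (distinct_input N j \<rho> a) k \<noteq> oracle_flips N (collision_input j \<rho> b) k
       then X a * Y b else 0)
    = (if answers_differ ty p a b then adv_weight a b * (X a * Y b) else 0)" for a b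
    by (simp only: differ) simp
  ultimately show ?thesis
    using True by simp
next
  case False
  then show ?thesis
    by (simp add: oracle_flips_eq_if_not_touches)
qed

definition query_mass :: "(qstate \<Rightarrow> qstate) \<Rightarrow> nat \<Rightarrow> (nat \<Rightarrow> real) \<Rightarrow> nat \<Rightarrow> nat \<Rightarrow> real" where
  "query_mass U N x t j = infsum (\<lambda>k. (cmod (final_state U t N x k))\<^sup>2 * of_bool (touches N j k)) UNIV"

lemma sum_adv_weight_flip_overlap_le:
  assumes U: "unitary_op U" and j: "j < N" and l: "0 < l"
  shows "(\<Sum>a<N. \<Sum>b<N - 1. adv_weight a b * flip_overlap U N (distinct_input N j \<rho> a) (collision_input j \<rho> b) t)
    \<le> l * ((pi + 1) / 2) / 2 * (\<Sum>a<N. query_mass U N (distinct_input N j \<rho> a) t j)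
      + (pi + 1) / 2 / l / 2 * (\<Sum>b<N - 1. query_mass U N (collision_input j \<rho> b) t j)"
proof -
  define X where "X a k = cmod (final_state U t N (distinct_input N j \<rho> a) k)" for a k
  define Y where "Y b k = cmod (final_state U t N (collision_input j \<rho> b) k)" for b k
  define g where "g a b = (\<lambda>k. adv_weight a b *
    (if oracle_flips N (distinct_input N j \<rho> a) k \<noteq> oracle_flips N (collision_input j \<rho> b) k
     then X a k * Y b k else 0))" for a b
  define R C where "R = l * ((pi + 1) / 2) / 2" and "C = (pi + 1) / 2 / l / 2"
  have g: "g a b summable_on UNIV" for a b
    unfolding g_def X_def Y_def
    by (intro summable_on_cmult_right summable_on_if_nonneg summable_on_cmod_mult sq_summable_final_state U) auto
  have X: "(\<lambda>k. (X a k)\<^sup>2 * of_bool (touches N j k)) summable_on UNIV"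
    and Y: "(\<lambda>k. (Y b k)\<^sup>2 * of_bool (touches N j k)) summable_on UNIV" for a b
    unfolding X_def Y_def by (intro summable_on_cmod_sq_of_bool sq_summable_final_state U)+
  have "(\<Sum>a<N. \<Sum>b<N - 1. adv_weight a b * flip_overlap U N (distinct_input N j \<rho> a) (collision_input j \<rho> b) t)
      = (\<Sum>a<N. \<Sum>b<N - 1. infsum (g a b) UNIV)"
    unfolding flip_overlap_def g_def X_def Y_def by (simp add: infsum_cmult_right')
  also have "\<dots> = infsum (\<lambda>k. \<Sum>a<N. \<Sum>b<N - 1. g a b k) UNIV"
    using g by (simp add: infsum_sum summable_on_sum)
  also have "\<dots> \<le> infsum (\<lambda>k. R * (\<Sum>a<N. (X a k)\<^sup>2 * of_bool (touches N j k))
      + C * (\<Sum>b<N - 1. (Y b k)\<^sup>2 * of_bool (touches N j k))) UNIV"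
    unfolding R_def C_def g_def using j l
    by (intro infsum_mono summable_on_add summable_on_cmult_right summable_on_sum g[unfolded g_def] X Y
        sum_adv_weight_flips_differ_le) auto
  also have "\<dots> = R * (\<Sum>a<N. query_mass U N (distinct_input N j \<rho> a) t j)
      + C * (\<Sum>b<N - 1. query_mass U N (collision_input j \<rho> b) t j)"
  proof -
    have SX: "(\<lambda>k. \<Sum>a<N. (X a k)\<^sup>2 * of_bool (touches N j k)) summable_on UNIV"
      and SY: "(\<lambda>k. \<Sum>b<N - 1. (Y b k)\<^sup>2 * of_bool (touches N j k)) summable_on UNIV"
      using X Y by (intro summable_on_sum; simp)+
    show ?thesis
      unfolding infsum_add[OF summable_on_cmult_right[OF SX] summable_on_cmult_right[OF SY]]
        infsum_cmult_right[OF SX] infsum_cmult_right[OF SY]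
        infsum_sum[OF finite_lessThan X] infsum_sum[OF finite_lessThan Y]
      by (simp add: query_mass_def X_def Y_def)
  qed
  finally show ?thesis
    unfolding R_def C_def .
qed

section \<open>Summing over the adversary\<close>

lemma query_mass_nonneg: "0 \<le> query_mass U N x t j"
  unfolding query_mass_def by (intro infsum_nonneg) simp

lemma query_mass_le_one:
  assumes "unitary_op U"
  shows "query_mass U N x t j \<le> 1"
proof -
  have "query_mass U N x t j \<le> norm2 (final_state U t N x)"
    unfolding query_mass_def norm2_def using sq_summable_final_state[OF assms]
    by (intro infsum_mono summable_on_cmod_sq_of_bool) (auto simp: sq_summable_def)
  then show ?thesis
    using norm2_final_state[OF assms] by simp
qed

lemma sum_of_bool_touches_le: "(\<Sum>j<N. of_bool (touches N j k) :: real) \<le> 2"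
proof -
  obtain z i i' where k: "k = (z, i, i')" by (cases k)
  have "(\<Sum>j<N. of_bool (touches N j k) :: real) \<le> (\<Sum>j<N. (if j = i then 1 else 0) + (if j = i' then 1 else 0))"
    by (rule sum_mono) (auto simp: touches_def k)
  also have "\<dots> \<le> 2"
    by (simp only: sum.distrib sum.delta') simp
  finally show ?thesis .
qed

lemma sum_query_mass_le:
  assumes U: "unitary_op U"
  shows "(\<Sum>j<N. query_mass U N x t j) \<le> 2"
proof -
  let ?\<psi> = "final_state U t N x"
  have sq: "(\<lambda>k. (cmod (?\<psi> k))\<^sup>2) summable_on UNIV"
    using sq_summable_final_state[OF U] by (simp add: sq_summable_def)
  have "(\<Sum>j<N. query_mass U N x t j) = infsum (\<lambda>k. (cmod (?\<psi> k))\<^sup>2 * (\<Sum>j<N. of_bool (touches N j k))) UNIV"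
    unfolding query_mass_def sum_distrib_left
    by (rule infsum_sum[symmetric]) (auto intro: summable_on_cmod_sq_of_bool sq_summable_final_state U)
  also have "\<dots> \<le> infsum (\<lambda>k. 2 * (cmod (?\<psi> k))\<^sup>2) UNIV"
  proof (rule infsum_mono)
    show "(\<lambda>k. (cmod (?\<psi> k))\<^sup>2 * (\<Sum>j<N. of_bool (touches N j k))) summable_on UNIV"
      unfolding sum_distrib_left
      by (intro summable_on_sum summable_on_cmod_sq_of_bool sq_summable_final_state U finite_lessThan)
    show "(\<lambda>k. 2 * (cmod (?\<psi> k))\<^sup>2) summable_on UNIV"
      using sq by (rule summable_on_cmult_right)
    fix k
    have "(cmod (?\<psi> k))\<^sup>2 * (\<Sum>j<N. of_bool (touches N j k)) \<le> (cmod (?\<psi> k))\<^sup>2 * 2"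
      by (rule mult_left_mono[OF sum_of_bool_touches_le]) simp
    then show "(cmod (?\<psi> k))\<^sup>2 * (\<Sum>j<N. of_bool (touches N j k)) \<le> 2 * (cmod (?\<psi> k))\<^sup>2"
      by linarith
  qed
  also have "\<dots> = 2"
    using norm2_final_state[OF U] by (simp add: infsum_cmult_right[OF sq] norm2_def)
  finally show ?thesis .
qed

lemma sum_query_mass_distinct_input_le:
  assumes U: "unitary_op U"
  shows "(\<Sum>j<N. \<Sum>\<rho>\<in>{\<rho>. \<rho> permutes {..<N - 1}}. \<Sum>a<N. query_mass U N (distinct_input N j \<rho> a) t j)
    \<le> 2 * fact N"
proof -
  let ?R = "{\<rho>. \<rho> permutes {..<N - 1}}" and ?P = "{\<sigma>. \<sigma> permutes {..<N}}"
  define h where "h j \<sigma> = query_mass U N (\<lambda>i. real (\<sigma> i)) t j" for j \<sigma>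
  have reindex: "(\<Sum>\<rho>\<in>?R. \<Sum>a<N. h j (insert_at N j \<rho> a)) \<le> (\<Sum>\<sigma>\<in>?P. h j \<sigma>)" if j: "j < N" for j
  proof -
    have "(\<Sum>\<rho>\<in>?R. \<Sum>a<N. h j (insert_at N j \<rho> a)) = (\<Sum>(\<rho>, a)\<in>?R \<times> {..<N}. h j (insert_at N j \<rho> a))"
      by (simp add: sum.cartesian_product)
    also have "\<dots> = (\<Sum>\<sigma>\<in>(\<lambda>(\<rho>, a). insert_at N j \<rho> a) ` (?R \<times> {..<N}). h j \<sigma>)"
      using sum.reindex[OF inj_on_insert_at[OF j], of "h j"] by (simp add: case_prod_unfold)
    also have "\<dots> \<le> (\<Sum>\<sigma>\<in>?P. h j \<sigma>)"
      using insert_at_permutes[OF j]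
      by (intro sum_mono2) (auto simp: finite_permutations h_def query_mass_nonneg)
    finally show ?thesis .
  qed
  have "(\<Sum>j<N. \<Sum>\<rho>\<in>?R. \<Sum>a<N. query_mass U N (distinct_input N j \<rho> a) t j)
      = (\<Sum>j<N. \<Sum>\<rho>\<in>?R. \<Sum>a<N. h j (insert_at N j \<rho> a))"
    by (simp add: h_def distinct_input_def)
  also have "\<dots> \<le> (\<Sum>j<N. \<Sum>\<sigma>\<in>?P. h j \<sigma>)"
    by (intro sum_mono reindex) simp
  also have "\<dots> = (\<Sum>\<sigma>\<in>?P. \<Sum>j<N. h j \<sigma>)"
    by (rule sum.swap)
  also have "\<dots> \<le> (\<Sum>\<sigma>\<in>?P. 2)"
    unfolding h_def by (intro sum_mono sum_query_mass_le U)
  also have "\<dots> = 2 * fact N"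
    using card_permutations[of "{..<N}" N] by simp
  finally show ?thesis .
qed

lemma card_permutes_lessThan: "card {\<rho>. \<rho> permutes {..<M}} = fact M"
  using card_permutations[of "{..<M}" M] by simp

lemma sum_query_mass_collision_input_le:
  assumes U: "unitary_op U"
  shows "(\<Sum>j<N. \<Sum>\<rho>\<in>{\<rho>. \<rho> permutes {..<N - 1}}. \<Sum>b<N - 1. query_mass U N (collision_input j \<rho> b) t j)
    \<le> real N * fact (N - 1) * real (N - 1)"
proof -
  have "(\<Sum>j<N. \<Sum>\<rho>\<in>{\<rho>. \<rho> permutes {..<N - 1}}. \<Sum>b<N - 1. query_mass U N (collision_input j \<rho> b) t j)
      \<le> (\<Sum>j<N. \<Sum>\<rho>\<in>{\<rho>. \<rho> permutes {..<N - 1}}. \<Sum>b<N - 1. 1)"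
    by (intro sum_mono query_mass_le_one U)
  then show ?thesis
    by (cases N) (simp_all add: card_permutes_lessThan)
qed

lemma sum_adv_weight_ge:
  assumes "1 \<le> N"
  shows "real N * (harm N - 1) \<le> (\<Sum>a<N. \<Sum>b<N - 1. adv_weight a b)"
proof -
  have "real (Suc n) * (harm (Suc n) - 1) \<le> (\<Sum>a<Suc n. \<Sum>b<n. adv_weight a b)" for n
  proof (induction n)
    case (Suc n)
    have last_col: "adv_weight a n = 1 / (2 * real (n - a) + 1)" if "a < Suc n" for a
      using that by (simp add: adv_weight_def of_nat_diff)
    have last_row: "adv_weight (Suc n) b = 1 / (2 * real (n - b) + 1)" if "b < Suc n" for b
      using that by (simp add: adv_weight_def of_nat_diff)
    have "harm (Suc n) = (\<Sum>a<Suc n. 1 / (real (n - a) + 1))"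
      using sum.nat_diff_reindex[of "\<lambda>a. 1 / (real a + 1)" "Suc n"]
      by (simp add: harm_altdef field_simps)
    also have "\<dots> \<le> (\<Sum>a<Suc n. 2 / (2 * real (n - a) + 1))"
      by (rule sum_mono) (simp add: field_simps)
    also have "\<dots> = (\<Sum>a<Suc n. adv_weight a n) + (\<Sum>b<Suc n. adv_weight (Suc n) b)"
      unfolding sum.distrib[symmetric] by (rule sum.cong) (simp_all add: last_col last_row)
    finally have "harm (Suc n) \<le> (\<Sum>a<Suc n. adv_weight a n) + (\<Sum>b<Suc n. adv_weight (Suc n) b)" .
    moreover have "real (Suc (Suc n)) * (harm (Suc (Suc n)) - 1) = real (Suc n) * (harm (Suc n) - 1) + harm (Suc n)"
      by (simp add: harm_Suc[of "Suc n"] field_simps)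
    ultimately show ?case
      using Suc.IH by (simp add: sum.distrib)
  qed (simp add: harm_def)
  moreover obtain n where "N = Suc n"
    using assms by (cases N) auto
  ultimately show ?thesis by simp
qed

definition adversary_sum :: "nat \<Rightarrow> ((nat \<Rightarrow> real) \<Rightarrow> (nat \<Rightarrow> real) \<Rightarrow> real) \<Rightarrow> real" where
  "adversary_sum N F = (\<Sum>j<N. \<Sum>\<rho>\<in>{\<rho>. \<rho> permutes {..<N - 1}}. \<Sum>a<N. \<Sum>b<N - 1.
     adv_weight a b * F (distinct_input N j \<rho> a) (collision_input j \<rho> b))"

lemma adversary_sum_mono:
  assumes "\<And>j \<rho> a b. j < N \<Longrightarrow> \<rho> permutes {..<N - 1} \<Longrightarrow> a < N \<Longrightarrow> b < N - 1 \<Longrightarrow>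
    F (distinct_input N j \<rho> a) (collision_input j \<rho> b) \<le> G (distinct_input N j \<rho> a) (collision_input j \<rho> b)"
  shows "adversary_sum N F \<le> adversary_sum N G"
  unfolding adversary_sum_def by (intro sum_mono mult_left_mono assms adv_weight_nonneg) auto

lemma adversary_sum_const:
  assumes "1 \<le> N"
  shows "adversary_sum N (\<lambda>_ _. c) = c * fact N * (\<Sum>a<N. \<Sum>b<N - 1. adv_weight a b)"
proof -
  have "fact N = real N * fact (N - 1)"
    using assms by (cases N) (simp_all add: fact_Suc)
  then show ?thesis
    by (simp add: adversary_sum_def card_permutes_lessThan sum_distrib_left sum_distrib_right mult_ac)
qed

lemma adversary_sum_mult_sum:
  "adversary_sum N (\<lambda>x y. c * (\<Sum>t\<in>A. F t x y)) = c * (\<Sum>t\<in>A. adversary_sum N (F t))"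
  by (simp add: adversary_sum_def sum_distrib_left sum.swap[of _ A] mult.left_commute)

lemma sqrt_two_mult_pi_plus_one_le: "sqrt 2 * ((pi + 1) / 2) \<le> pi"
proof -
  have "3 * 1 \<le> pi * (pi - 2)"
    using pi_gt3 by (intro mult_mono) auto
  then have "(pi + 1)\<^sup>2 \<le> 2 * pi\<^sup>2"
    by (simp add: power2_eq_square algebra_simps)
  then have "sqrt ((pi + 1)\<^sup>2) \<le> sqrt (2 * pi\<^sup>2)"
    by (rule real_sqrt_le_mono)
  then have "pi + 1 \<le> sqrt 2 * pi"
    using pi_gt3 by (simp add: real_sqrt_mult)
  from mult_left_mono[OF this, of "sqrt 2"] show ?thesis
    by (simp add: mult.assoc[symmetric])
qed

lemma adversary_sum_flip_overlap_le:
  assumes U: "unitary_op U" and N: "2 \<le> N"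
  shows "adversary_sum N (\<lambda>x y. flip_overlap U N x y t) \<le> pi * sqrt (real N) * fact N"
proof -
  let ?R = "{\<rho>. \<rho> permutes {..<N - 1}}" and ?K = "(pi + 1) / 2"
  define l where "l = sqrt ((real N - 1) / 2)"
  have l: "0 < l" "real (N - 1) = 2 * l\<^sup>2"
    using N by (simp_all add: l_def of_nat_diff)
  have fact: "fact N = real N * fact (N - 1)"
    using N by (cases N) (simp_all add: fact_Suc)
  have "adversary_sum N (\<lambda>x y. flip_overlap U N x y t)
      \<le> (\<Sum>j<N. \<Sum>\<rho>\<in>?R. l * ?K / 2 * (\<Sum>a<N. query_mass U N (distinct_input N j \<rho> a) t j)
          + ?K / l / 2 * (\<Sum>b<N - 1. query_mass U N (collision_input j \<rho> b) t j))"
    unfolding adversary_sum_def by (intro sum_mono sum_adv_weight_flip_overlap_le U l) simp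
  also have "\<dots> = l * ?K / 2 * (\<Sum>j<N. \<Sum>\<rho>\<in>?R. \<Sum>a<N. query_mass U N (distinct_input N j \<rho> a) t j)
      + ?K / l / 2 * (\<Sum>j<N. \<Sum>\<rho>\<in>?R. \<Sum>b<N - 1. query_mass U N (collision_input j \<rho> b) t j)"
    by (simp add: sum.distrib sum_distrib_left)
  also have "\<dots> \<le> l * ?K / 2 * (2 * fact N) + ?K / l / 2 * (real N * fact (N - 1) * real (N - 1))"
    using l pi_gt_zero
    by (intro add_mono mult_left_mono sum_query_mass_distinct_input_le sum_query_mass_collision_input_le U) auto
  also have "\<dots> = 2 * l * ?K * fact N"
    using l fact by (simp add: power2_eq_square field_simps)
  also have "\<dots> = sqrt 2 * ?K * (sqrt (real N - 1) * fact N)"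
  proof -
    have "2 * l = sqrt (2\<^sup>2 * ((real N - 1) / 2))"
      by (simp only: l_def real_sqrt_mult real_sqrt_abs abs_numeral)
    also have "\<dots> = sqrt 2 * sqrt (real N - 1)"
      by (simp add: power2_eq_square real_sqrt_mult[symmetric])
    finally show ?thesis by (simp add: mult_ac)
  qed
  also have "\<dots> \<le> pi * (sqrt (real N) * fact N)"
    using N sqrt_two_mult_pi_plus_one_le by (intro mult_mono) auto
  finally show ?thesis by simp
qed

lemma sqrt_mult_one_minus_le: "sqrt (e * (1 - e)) \<le> 1 / 2"
proof -
  have "e * (1 - e) \<le> (1 / 2)\<^sup>2"
    using sum_squares_bound[of e "1 - e"] by (simp add: power2_eq_square algebra_simps)
  then show ?thesis
    using real_sqrt_le_mono by fastforce
qed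

lemma mult_le_mult_sqrt_imp_mult_sqrt_le:
  fixes u v n :: real
  assumes "0 < n" "u * n \<le> v * sqrt n"
  shows "u * sqrt n \<le> v"
proof -
  have "(u * sqrt n) * sqrt n \<le> v * sqrt n"
    using assms by (simp add: mult.assoc)
  then show ?thesis
    using assms(1) by (simp add: mult_le_cancel_right_pos)
qed

theorem theorem3:
  fixes N T :: nat and \<epsilon> :: real and U :: "qstate \<Rightarrow> qstate" and out :: "label \<Rightarrow> bool"
  assumes "N \<ge> 1" and "0 \<le> \<epsilon>" and "\<epsilon> < 1/2"
    and "ED_algorithm N \<epsilon> U out T"
  shows "real T \<ge> (1 - 2 * sqrt (\<epsilon> * (1 - \<epsilon>))) * (sqrt (real N) / (2 * pi)) * (harm N - 1)"
proof (cases "N = 1")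
  case True
  then show ?thesis by (simp add: harm_def)
next
  case False
  with assms(1) have N: "2 \<le> N" by simp
  have U: "unitary_op U"
    using assms(4) by (simp add: ED_algorithm_def)
  define c where "c = 1 - 2 * sqrt (\<epsilon> * (1 - \<epsilon>))"
  have "2 * c * fact N * (real N * (harm N - 1)) \<le> adversary_sum N (\<lambda>_ _. 2 * c)"
    using adversary_sum_const[OF assms(1)] sum_adv_weight_ge[OF assms(1)] sqrt_mult_one_minus_le[of \<epsilon>]
    by (simp add: c_def mult_left_mono)
  also have "\<dots> \<le> adversary_sum N (\<lambda>x y. norm2 (\<lambda>k. final_state U T N x k - final_state U T N y k))"
    using norm2_diff_final_state_ge[OF assms(4,2,3)] all_distinct_distinct_input not_all_distinct_collision_input
    by (intro adversary_sum_mono) (simp add: c_def)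
  also have "\<dots> \<le> adversary_sum N (\<lambda>x y. 4 * (\<Sum>t<T. flip_overlap U N x y t))"
    by (intro adversary_sum_mono norm2_diff_final_state_le U)
  also have "\<dots> \<le> 4 * (real T * (pi * sqrt (real N) * fact N))"
    using sum_bounded_above[of "{..<T}" "\<lambda>t. adversary_sum N (\<lambda>x y. flip_overlap U N x y t)"]
      adversary_sum_flip_overlap_le[OF U N] by (simp add: adversary_sum_mult_sum)
  finally have "(2 * fact N) * (c * (harm N - 1) * real N) \<le> (2 * fact N) * (2 * pi * real T * sqrt (real N))"
    by (simp add: algebra_simps)
  then have "c * (harm N - 1) * real N \<le> 2 * pi * real T * sqrt (real N)"
    by (rule mult_left_le_imp_le) simp
  then have "c * (harm N - 1) * sqrt (real N) \<le> 2 * pi * real T"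
    using N by (intro mult_le_mult_sqrt_imp_mult_sqrt_le) auto
  then show ?thesis
    unfolding c_def using pi_gt_zero by (simp add: field_simps)
qed

end
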